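(* Let $d\ge2$ be an integer and $a\in\mathbb C$ such that $((d+1)a)^k=1$, where $k$ is the smallest such positive integer. Let $p(t)=a\Bigl((d-1)-\sum_{i=1}^d2t^i\Bigr)$ and put $N=\operatorname{lcm}(k,d+1)$ if $d$ is odd and $N=\operatorname{lcm}(k,2(d+1))$ if $d$ is even. Then the column partial sums of $p$ satisfy $S_{[m+N]}=S_{[m]}$ for all $m\ge1$; in particular $(S_{[m]})_{m\ge1}$ is periodic.
   Context: For a polynomial $p(t)$ of degree $d\ge1$ with $p(0)\neq0$, the column partial sums are $S_{[m]}:=[t^{(m-1)(d+1)}]\dfrac{(tp(t))^m}{(1-t)(1-t^{d+1})}$ for $m\ge1$ (equivalently, the sum of the coefficients of $t^0,\dots,t^{(m-1)(d+1)}$ in $(tp(t))^m/(1-t^{d+1})$). *)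

theory Defs
  imports "HOL-Computational_Algebra.Computational_Algebra"
begin

definition col_partial_sum :: "complex poly \<Rightarrow> nat \<Rightarrow> complex" where
  "col_partial_sum p m =
     fps_nth ((fps_X * fps_of_poly p) ^ m
              * inverse ((1 - fps_X) * (1 - fps_X ^ (degree p + 1))))
             ((m - 1) * (degree p + 1))"

end

theory Submission
  imports Defs "HOL-Number_Theory.Cong"
begin

text \<open>Write \<open>n = d + 1\<close> and \<open>q(t) = t p(t)\<close>. Expanding
  \<open>1/((1 - t)(1 - t^n)) = \<Sum>j. (j div n + 1) t^j\<close> gives
  \<open>n S_[m] = n m q(1)^m - (q^m)'(1) - \<Sum>i. [t^i] q^m \<cdot> ((-i) mod n)\<close>.
  Since \<open>q'(1) = n q(1)\<close>, the first two terms cancel, and the remaining weighted coefficient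
  sum only depends on \<open>q^m\<close> modulo \<open>t^n - 1\<close>. Modulo \<open>t^n - 1\<close> we have
  \<open>q \<equiv> b t - 2a J\<close> with \<open>b = n a\<close> and \<open>J = 1 + t + \<dots> + t^(n-1)\<close>; as \<open>t J \<equiv> J\<close> and
  \<open>J^2 \<equiv> n J\<close>, every power has the shape \<open>q^N \<equiv> b^N t^N + e J\<close>. Evaluating at \<open>t = 1\<close>
  shows \<open>e = 0\<close> as soon as \<open>b^N = (-b)^N = 1\<close>, so \<open>q^N \<equiv> 1\<close> for the given \<open>N\<close>.\<close>

definition weighted_coeff_sum :: "(nat \<Rightarrow> 'a) \<Rightarrow> 'a poly \<Rightarrow> 'a::comm_semiring_0" where
  "weighted_coeff_sum w P = (\<Sum>i\<le>degree P. coeff P i * w i)"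

lemma weighted_coeff_sum_eq:
  "degree P \<le> D \<Longrightarrow> weighted_coeff_sum w P = (\<Sum>i\<le>D. coeff P i * w i)"
  unfolding weighted_coeff_sum_def
  by (rule sum.mono_neutral_left) (auto simp: coeff_eq_0)

lemma weighted_coeff_sum_diff:
  fixes P Q :: "'a::comm_ring poly"
  shows "weighted_coeff_sum w (P - Q) = weighted_coeff_sum w P - weighted_coeff_sum w Q"
proof -
  let ?D = "max (degree P) (degree Q)"
  have "degree (P - Q) \<le> ?D" by (simp add: degree_diff_le_max)
  then show ?thesis
    by (simp add: weighted_coeff_sum_eq[of _ ?D] sum_subtractf algebra_simps)
qed

lemma weighted_coeff_sum_monom_mult:
  fixes H :: "'a::comm_semiring_1 poly"
  assumes periodic: "\<And>i. w (i + n) = w i"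
  shows "weighted_coeff_sum w (monom 1 n * H) = weighted_coeff_sum w H"
proof -
  have "weighted_coeff_sum w (monom 1 n * H) = (\<Sum>i\<le>degree H + n. coeff (monom 1 n * H) i * w i)"
    using degree_mult_le[of "monom 1 n" H] degree_monom_le[of "1::'a" n]
    by (intro weighted_coeff_sum_eq) linarith
  also have "\<dots> = (\<Sum>i\<in>{n..degree H + n}. coeff H (i - n) * w i)"
    by (rule sum.mono_neutral_cong_right) (auto simp: coeff_monom_mult)
  also have "\<dots> = (\<Sum>j\<le>degree H. coeff H j * w (j + n))"
    using sum.shift_bounds_cl_nat_ivl[of "\<lambda>i. coeff H (i - n) * w i" 0 n "degree H"]
    by (simp add: atLeast0AtMost)
  finally show ?thesis by (simp add: weighted_coeff_sum_def periodic)
qed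

lemma weighted_coeff_sum_cong:
  fixes A B :: "'a::field poly"
  assumes periodic: "\<And>i. w (i + n) = w i" and "[A = B] (mod (monom 1 n - 1))"
  shows "weighted_coeff_sum w A = weighted_coeff_sum w B"
proof -
  obtain H where "A - B = (monom 1 n - 1) * H"
    using assms(2) unfolding cong_iff_dvd_diff by (rule dvdE)
  then have "A - B = monom 1 n * H - H" by (simp add: algebra_simps)
  then have "weighted_coeff_sum w (A - B) = 0"
    by (simp add: weighted_coeff_sum_diff weighted_coeff_sum_monom_mult[of w n, OF periodic])
  then show ?thesis by (simp add: weighted_coeff_sum_diff)
qed

lemma poly_one_eq_sum_coeff:
  fixes P :: "'a::comm_semiring_1 poly"
  shows "degree P \<le> D \<Longrightarrow> poly P 1 = (\<Sum>i\<le>D. coeff P i)"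
  using weighted_coeff_sum_eq[of P D "\<lambda>_. 1"] by (simp add: weighted_coeff_sum_def poly_altdef)

lemma poly_pderiv_one_eq_sum_coeff:
  fixes P :: "'a::{comm_semiring_1,semiring_no_zero_divisors} poly"
  assumes "degree P \<le> D"
  shows "poly (pderiv P) 1 = (\<Sum>i\<le>D. of_nat i * coeff P i)"
proof -
  have "degree (pderiv P) \<le> D"
    using assms by (intro degree_le) (simp add: coeff_pderiv coeff_eq_0)
  then have "poly (pderiv P) 1 = (\<Sum>i\<le>D. of_nat (Suc i) * coeff P (Suc i))"
    by (simp only: poly_one_eq_sum_coeff coeff_pderiv)
  also have "\<dots> = (\<Sum>i\<le>Suc D. of_nat i * coeff P i)"
    by (simp only: sum.atMost_Suc_shift) simp
  also have "\<dots> = (\<Sum>i\<le>D. of_nat i * coeff P i)"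
    using assms by (simp add: coeff_eq_0)
  finally show ?thesis .
qed

lemma poly_pderiv_power_eq:
  fixes q :: "'a::{comm_semiring_1,semiring_no_zero_divisors} poly"
  assumes "poly (pderiv q) x = c * poly q x"
  shows "poly (pderiv (q ^ m)) x = of_nat m * c * poly q x ^ m"
proof (cases m)
  case (Suc k)
  have "poly (pderiv (q ^ Suc k)) x = of_nat (Suc k) * poly q x ^ k * (c * poly q x)"
    by (simp only: pderiv_power_Suc poly_mult poly_smult poly_power assms)
  with Suc show ?thesis by (simp add: algebra_simps)
qed simp

lemma fps_inverse_one_minus_X_times_one_minus_X_power:
  fixes n :: nat
  assumes "0 < n"
  shows "inverse ((1 - fps_X) * (1 - fps_X ^ n) :: 'a::field fps) = Abs_fps (\<lambda>j. of_nat (j div n + 1))"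
proof (rule fps_inverse_unique)
  let ?K = "Abs_fps (\<lambda>j. of_nat (j div n + 1)) :: 'a fps"
  let ?D = "Abs_fps (\<lambda>j. if n dvd j then 1 else 0) :: 'a fps"
  have "(1 - fps_X) * ?K = ?D"
  proof (rule fps_ext)
    fix j
    show "((1 - fps_X) * ?K) $ j = ?D $ j"
    proof (cases j)
      case (Suc i)
      with assms have "Suc i div n = i div n + (if n dvd Suc i then 1 else 0)"
        by (simp add: div_Suc dvd_eq_mod_eq_0)
      with Suc show ?thesis by (simp add: algebra_simps)
    qed simp
  qed
  moreover have "(1 - fps_X ^ n) * ?D = 1"
  proof (rule fps_ext)
    fix j
    show "((1 - fps_X ^ n) * ?D) $ j = (1 :: 'a fps) $ j"
    proof (cases "j < n")
      case True
      with assms show ?thesis by (auto simp: algebra_simps fps_X_power_mult_nth dest: dvd_imp_le)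
    next
      case False
      then have "n dvd j \<longleftrightarrow> n dvd (j - n)" by (simp add: dvd_minus_self)
      with False assms show ?thesis by (simp add: algebra_simps fps_X_power_mult_nth)
    qed
  qed
  ultimately show "(1 - fps_X) * (1 - fps_X ^ n) * ?K = 1"
    by (metis mult.assoc mult.commute)
qed

lemma of_nat_mult_div_diff:
  fixes n N i :: nat
  assumes "n dvd N" "i \<le> N"
  shows "(of_nat (n * ((N - i) div n)) :: 'a::ring_1) = of_nat N - of_nat i - of_int (- int i mod int n)"
proof -
  have "int (n * ((N - i) div n)) = int (N - i - (N - i) mod n)"
    by (simp only: minus_mod_eq_mult_div)
  also have "\<dots> = int (N - i) - int ((N - i) mod n)"
    by (rule of_nat_diff) (rule mod_less_eq_dividend)
  also have "int ((N - i) mod n) = (int N - int i) mod int n"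
    using assms(2) by (simp add: of_nat_mod of_nat_diff)
  also have "\<dots> = - int i mod int n"
    using assms(1) by (simp add: mod_diff_left_eq[of "int N", symmetric] flip: of_nat_mod)
  finally have "int (n * ((N - i) div n)) = int N - int i - - int i mod int n"
    using assms(2) by (simp add: of_nat_diff)
  then show ?thesis
    by (metis of_int_diff of_int_of_nat_eq)
qed

lemma minus_mod_add_self: "- int (i + n) mod int n = - int i mod int n"
  by (metis diff_conv_add_uminus minus_add_distrib minus_mod_self2 of_nat_add)

lemma coeff_fps_of_poly_times_inverse:
  fixes P :: "'a::field poly"
  assumes n: "0 < n" and m: "1 \<le> m" and deg: "degree P \<le> n * m"
  shows "of_nat n * (fps_of_poly P * inverse ((1 - fps_X) * (1 - fps_X ^ n))) $ ((m - 1) * n)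
    = of_nat (n * m) * poly P 1 - poly (pderiv P) 1
      - weighted_coeff_sum (\<lambda>i. of_int (- int i mod int n)) P"
proof -
  let ?M = "(m - 1) * n"
  have nm: "n * m = ?M + n"
    using m by (cases m) (simp_all add: algebra_simps)
  have "(fps_of_poly P * inverse ((1 - fps_X) * (1 - fps_X ^ n))) $ ?M
      = (\<Sum>i=0..?M. coeff P i * of_nat ((?M - i) div n + 1))"
    using n by (simp add: fps_inverse_one_minus_X_times_one_minus_X_power fps_mult_nth
        del: of_nat_add of_nat_Suc)
  also have "\<dots> = (\<Sum>i=0..?M. coeff P i * of_nat ((n * m - i) div n))"
  proof (rule sum.cong)
    fix i assume "i \<in> {0..?M}"
    then have "n * m - i = (?M - i) + n" using nm by auto
    then show "coeff P i * of_nat ((?M - i) div n + 1) = coeff P i * of_nat ((n * m - i) div n)"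
      using n by simp
  qed simp
  also have "\<dots> = (\<Sum>i\<le>n * m. coeff P i * of_nat ((n * m - i) div n))"
    by (rule sum.mono_neutral_left) (use nm in auto)
  finally have "of_nat n * (fps_of_poly P * inverse ((1 - fps_X) * (1 - fps_X ^ n))) $ ?M
      = (\<Sum>i\<le>n * m. coeff P i * of_nat (n * ((n * m - i) div n)))"
    by (simp add: sum_distrib_left algebra_simps)
  also have "\<dots> = (\<Sum>i\<le>n * m. coeff P i * (of_nat (n * m) - of_nat i - of_int (- int i mod int n)))"
    by (intro sum.cong refl) (simp add: of_nat_mult_div_diff del: of_nat_mult)
  also have "\<dots> = of_nat (n * m) * poly P 1 - poly (pderiv P) 1
      - weighted_coeff_sum (\<lambda>i. of_int (- int i mod int n)) P"
    using deg
    by (simp add: poly_one_eq_sum_coeff poly_pderiv_one_eq_sum_coeff weighted_coeff_sum_eq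
        algebra_simps sum_subtractf sum_distrib_left sum.distrib)
  finally show ?thesis .
qed

lemma col_partial_sum_eq_weighted_coeff_sum:
  fixes p :: "complex poly"
  defines "n \<equiv> degree p + 1" and "q \<equiv> monom 1 1 * p"
  assumes euler: "poly (pderiv q) 1 = of_nat n * poly q 1" and m: "1 \<le> m"
  shows "of_nat n * col_partial_sum p m = - weighted_coeff_sum (\<lambda>i. of_int (- int i mod int n)) (q ^ m)"
proof -
  have fps: "(fps_X * fps_of_poly p) ^ m = fps_of_poly (q ^ m)"
    by (simp add: q_def fps_of_poly_mult fps_of_poly_monom' fps_of_poly_power)
  have "degree (q ^ m) \<le> n * m"
  proof -
    have "degree q \<le> n"
      using degree_mult_le[of "monom 1 1" p] degree_monom_le[of "1::complex" 1]
      by (simp add: q_def n_def)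
    then show ?thesis
      by (metis degree_power_le mult.commute mult_le_mono1 order_trans)
  qed
  then have "of_nat n * col_partial_sum p m = of_nat (n * m) * poly (q ^ m) 1
      - poly (pderiv (q ^ m)) 1 - weighted_coeff_sum (\<lambda>i. of_int (- int i mod int n)) (q ^ m)"
    unfolding col_partial_sum_def fps n_def[symmetric]
    by (intro coeff_fps_of_poly_times_inverse) (use m in \<open>simp_all add: n_def\<close>)
  also have "poly (pderiv (q ^ m)) 1 = of_nat (n * m) * poly (q ^ m) 1"
    using poly_pderiv_power_eq[OF euler, of m] by (simp add: poly_power algebra_simps)
  finally show ?thesis by simp
qed

lemma col_partial_sum_periodic:
  fixes p :: "complex poly"
  assumes euler: "poly (pderiv (monom 1 1 * p)) 1 = of_nat (degree p + 1) * poly (monom 1 1 * p) 1"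
    and cong: "[(monom 1 1 * p) ^ N = 1] (mod (monom 1 (degree p + 1) - 1))"
    and "1 \<le> m"
  shows "col_partial_sum p (m + N) = col_partial_sum p m"
proof -
  let ?n = "degree p + 1" and ?q = "monom 1 1 * p"
  let ?W = "weighted_coeff_sum (\<lambda>i. of_int (- int i mod int ?n) :: complex)"
  have "[?q ^ (m + N) = ?q ^ m * 1] (mod (monom 1 ?n - 1))"
    unfolding power_add by (intro cong_mult cong_refl cong)
  then have "?W (?q ^ (m + N)) = ?W (?q ^ m)"
    by (intro weighted_coeff_sum_cong[where n = ?n]) (simp_all only: minus_mod_add_self mult_1_right)
  then have "of_nat ?n * col_partial_sum p (m + N) = of_nat ?n * col_partial_sum p m"
    using col_partial_sum_eq_weighted_coeff_sum[OF euler] \<open>1 \<le> m\<close> by simp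
  moreover have "of_nat ?n \<noteq> (0 :: complex)"
    by (simp only: of_nat_eq_0_iff)
  ultimately show ?thesis by simp
qed

definition repunit :: "nat \<Rightarrow> 'a::comm_semiring_1 poly" where
  "repunit n = (\<Sum>j<n. monom 1 j)"

lemma coeff_repunit: "coeff (repunit n) i = (if i < n then 1 else 0)"
  by (simp add: repunit_def coeff_sum coeff_monom)

lemma poly_repunit_one: "poly (repunit n) 1 = of_nat n"
  by (simp add: repunit_def poly_sum poly_monom)

lemma monom_minus_one_mult_repunit:
  "(monom 1 1 - 1) * repunit n = monom 1 n - (1 :: 'a::comm_ring_1 poly)"
proof -
  have "(monom 1 1 - 1) * repunit n = (\<Sum>j<n. monom 1 (Suc j) - monom (1::'a) j)"
    by (simp add: repunit_def sum_distrib_left sum_subtractf mult_monom algebra_simps)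
  also have "\<dots> = monom 1 n - 1"
    by (subst sum_lessThan_telescope) (simp add: one_pCons monom_0)
  finally show ?thesis .
qed

lemma monom_eq_smult_monom: "NO_MATCH 1 a \<Longrightarrow> monom (a :: 'a::comm_semiring_1) k = smult a (monom 1 k)"
  by (simp add: smult_monom)

lemma cong_smult:
  "[A = B] (mod T) \<Longrightarrow> [smult c A = smult c B] (mod (T :: 'a::field poly))"
  by (simp add: cong_iff_dvd_diff dvd_smult flip: smult_diff_right)

lemma poly_one_cong:
  assumes "[A = B] (mod (monom 1 n - 1))"
  shows "poly A 1 = poly (B :: 'a::field poly) 1"
proof -
  obtain H where "A - B = (monom 1 n - 1) * H"
    using assms unfolding cong_iff_dvd_diff by (rule dvdE)
  then have "poly (A - B) 1 = 0" by (simp add: poly_monom)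
  then show ?thesis by simp
qed

lemma monom_cong_one:
  assumes "n dvd N"
  shows "[monom 1 N = 1] (mod (monom 1 n - (1 :: 'a::field poly)))"
proof -
  obtain t where N: "N = n * t" using assms by (rule dvdE)
  have "[monom 1 n = (1 :: 'a poly)] (mod (monom 1 n - 1))"
    by (simp add: cong_iff_dvd_diff)
  then have "[monom 1 n ^ t = (1 :: 'a poly) ^ t] (mod (monom 1 n - 1))"
    by (rule cong_pow)
  then show ?thesis by (simp add: N monom_power)
qed

lemma monom_mult_repunit_cong:
  "[monom 1 k * repunit n = repunit n] (mod (monom 1 n - (1 :: 'a::field poly)))"
proof (induction k)
  case 0
  then show ?case by (simp add: one_pCons monom_0)
next
  case (Suc k)
  have "[monom 1 1 * (monom 1 k * repunit n) = monom 1 1 * repunit n] (mod (monom 1 n - (1 :: 'a poly)))"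
    using Suc by (rule cong_scalar_left)
  moreover have "[monom 1 1 * repunit n = repunit n] (mod (monom 1 n - (1 :: 'a poly)))"
    using monom_minus_one_mult_repunit[of n, where 'a='a]
    by (simp add: cong_iff_dvd_diff left_diff_distrib)
  ultimately show ?case
    by (simp add: mult.assoc[symmetric] mult_monom cong_trans)
qed

lemma repunit_mult_repunit_cong:
  "[repunit n * repunit n = smult (of_nat n) (repunit n)] (mod (monom 1 n - (1 :: 'a::field poly)))"
proof -
  have "repunit n * repunit n = (\<Sum>j<n. monom 1 j * repunit n :: 'a poly)"
    by (simp add: repunit_def sum_distrib_right)
  also have "[\<dots> = (\<Sum>j<n. repunit n)] (mod (monom 1 n - 1))"
    by (intro cong_sum monom_mult_repunit_cong)
  also have "(\<Sum>j<n. repunit n) = smult (of_nat n) (repunit n :: 'a poly)"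
    by (simp add: of_nat_poly)
  finally show ?thesis .
qed

lemma power_cong_monom_plus_repunit:
  fixes q :: "'a::field poly"
  assumes "[q = monom b 1 + smult c (repunit n)] (mod (monom 1 n - 1))"
  shows "\<exists>e. [q ^ k = monom (b ^ k) k + smult e (repunit n)] (mod (monom 1 n - 1))"
proof (induction k)
  case 0
  show ?case by (intro exI[of _ 0]) (simp add: one_pCons monom_0)
next
  case (Suc k)
  let ?J = "repunit n :: 'a poly"
  from Suc obtain e where e: "[q ^ k = monom (b ^ k) k + smult e ?J] (mod (monom 1 n - 1))" by blast
  have "[q ^ Suc k = (monom b 1 + smult c ?J) * (monom (b ^ k) k + smult e ?J)] (mod (monom 1 n - 1))"
    unfolding power_Suc using assms e by (rule cong_mult)
  also have "(monom b 1 + smult c ?J) * (monom (b ^ k) k + smult e ?J)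
    = monom (b ^ Suc k) (Suc k) + smult (b * e) (monom 1 1 * ?J)
      + smult (c * b ^ k) (monom 1 k * ?J) + smult (c * e) (?J * ?J)"
    by (simp add: algebra_simps mult_monom monom_eq_smult_monom)
  also have "[\<dots> = monom (b ^ Suc k) (Suc k) + smult (b * e) ?J + smult (c * b ^ k) ?J
      + smult (c * e) (smult (of_nat n) ?J)] (mod (monom 1 n - 1))"
    by (intro cong_add cong_refl cong_smult monom_mult_repunit_cong repunit_mult_repunit_cong)
  \<comment> \<open>after a congruence step, \<open>\<dots>\<close> would denote the modulus\<close>
  also have "monom (b ^ Suc k) (Suc k) + smult (b * e) ?J + smult (c * b ^ k) ?J
      + smult (c * e) (smult (of_nat n) ?J)
    = monom (b ^ Suc k) (Suc k) + smult (b * e + c * b ^ k + c * e * of_nat n) ?J"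
    by (simp add: algebra_simps smult_add_left)
  finally show ?case by blast
qed

lemma power_cong_one:
  fixes q :: "'a::field poly"
  assumes q: "[q = monom b 1 + smult c (repunit n)] (mod (monom 1 n - 1))"
    and b: "b ^ N = 1" and q1: "poly q 1 ^ N = 1"
    and "n dvd N" and n: "of_nat n \<noteq> (0 :: 'a)"
  shows "[q ^ N = 1] (mod (monom 1 n - 1))"
proof -
  obtain e where e: "[q ^ N = monom (b ^ N) N + smult e (repunit n)] (mod (monom 1 n - 1))"
    using power_cong_monom_plus_repunit[OF q] by blast
  then have "poly (q ^ N) 1 = poly (monom (b ^ N) N + smult e (repunit n)) 1"
    by (rule poly_one_cong)
  with b q1 have "e * of_nat n = 0"
    by (simp add: poly_monom poly_repunit_one)
  with n have "e = 0" by simp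
  with e b have "[q ^ N = monom 1 N] (mod (monom 1 n - 1))" by simp
  also have "[monom 1 N = 1] (mod (monom 1 n - (1 :: 'a poly)))"
    using \<open>n dvd N\<close> by (rule monom_cong_one)
  finally show ?thesis .
qed

lemma Poly_eq_const_minus_repunit:
  assumes "1 \<le> d"
  shows "Poly (of_nat (d - 1) # replicate d (-2))
    = [:of_nat (d + 1):] - smult 2 (repunit (d + 1) :: 'a::comm_ring_1 poly)"
proof (rule poly_eqI)
  fix i
  show "coeff (Poly (of_nat (d - 1) # replicate d (-2))) i
    = coeff ([:of_nat (d + 1):] - smult 2 (repunit (d + 1) :: 'a poly)) i"
  proof (cases i)
    case 0
    with assms show ?thesis by (simp add: coeff_repunit)
  next
    case (Suc j)
    then show ?thesis by (simp add: coeff_repunit nth_default_def coeff_pCons)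
  qed
qed

lemma poly_const_minus_repunit_one:
  "poly ([:of_nat n:] - smult 2 (repunit n)) 1 = - (of_nat n :: 'a::comm_ring_1)"
  by (simp add: poly_repunit_one)

lemma poly_pderiv_const_minus_repunit_one:
  "poly (pderiv ([:of_nat (d + 1):] - smult 2 (repunit (d + 1)))) 1
    = - (of_nat d * of_nat (d + 1) :: 'a::idom)"
proof -
  have "degree (repunit (d + 1) :: 'a poly) \<le> d"
    by (rule degree_le) (simp add: coeff_repunit)
  then have "poly (pderiv (repunit (d + 1))) 1 = (\<Sum>i\<le>d. of_nat i :: 'a)"
    by (simp add: poly_pderiv_one_eq_sum_coeff coeff_repunit)
  then have "2 * poly (pderiv (repunit (d + 1))) 1 = (of_nat d * of_nat (d + 1) :: 'a)"
    using double_gauss_sum[of d] by (simp add: atLeast0AtMost algebra_simps)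
  then show ?thesis
    by (simp add: pderiv_diff pderiv_smult pderiv_pCons)
qed

lemma degree_const_minus_repunit:
  assumes "1 \<le> d"
  shows "degree ([:of_nat (d + 1):] - smult 2 (repunit (d + 1)) :: 'a::{idom,ring_char_0} poly) = d"
proof (rule antisym)
  show "degree ([:of_nat (d + 1):] - smult 2 (repunit (d + 1)) :: 'a poly) \<le> d"
    by (rule degree_le) (simp add: coeff_repunit coeff_pCons split: nat.split)
  show "d \<le> degree ([:of_nat (d + 1):] - smult 2 (repunit (d + 1)) :: 'a poly)"
    using assms by (intro le_degree) (simp add: coeff_repunit coeff_pCons split: nat.split)
qed

lemma poly_pderiv_monom_mult_smult_const_minus_repunit:
  fixes d :: nat and r :: "'a::idom poly"
  defines "r \<equiv> [:of_nat (d + 1):] - smult 2 (repunit (d + 1))"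
  shows "poly (pderiv (monom 1 1 * smult a r)) 1 = of_nat (d + 1) * poly (monom 1 1 * smult a r) 1"
proof -
  have r1: "poly r 1 = - of_nat (d + 1)"
    unfolding r_def by (rule poly_const_minus_repunit_one)
  have r'1: "poly (pderiv r) 1 = - (of_nat d * of_nat (d + 1))"
    unfolding r_def by (rule poly_pderiv_const_minus_repunit_one)
  have "pderiv (monom 1 1 * r) = monom 1 1 * pderiv r + r"
    by (simp add: pderiv_mult pderiv_monom)
  then have "poly (pderiv (monom 1 1 * r)) 1 = poly (pderiv r) 1 + poly r 1"
    by (simp add: poly_monom)
  also have "\<dots> = of_nat (d + 1) * poly r 1"
    unfolding r1 r'1 by (simp add: algebra_simps)
  finally show ?thesis by (simp add: poly_monom pderiv_smult)
qed

lemma monom_mult_const_minus_repunit_cong: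
  "[monom 1 1 * ([:of_nat n:] - smult 2 (repunit n))
     = monom (of_nat n) 1 + smult (- 2) (repunit n)] (mod (monom 1 n - (1 :: 'a::field poly)))"
proof -
  have "monom 1 1 * ([:of_nat n:] - smult 2 (repunit n))
      = monom (of_nat n) 1 + smult (- 2) (monom 1 1 * repunit n :: 'a poly)"
    by (simp add: algebra_simps monom_eq_smult_monom)
  also have "[\<dots> = monom (of_nat n) 1 + smult (- 2) (repunit n)] (mod (monom 1 n - 1))"
    by (intro cong_add cong_refl cong_smult monom_mult_repunit_cong)
  finally show ?thesis .
qed

lemma power_monom_mult_smult_const_minus_repunit_cong_one:
  fixes a :: "'a::field"
  assumes "(of_nat n * a) ^ N = 1" and "even N" and "n dvd N" and "of_nat n \<noteq> (0 :: 'a)"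
  shows "[(monom 1 1 * smult a ([:of_nat n:] - smult 2 (repunit n))) ^ N = 1]
    (mod (monom 1 n - 1))"
proof (rule power_cong_one)
  have "[monom 1 1 * smult a ([:of_nat n:] - smult 2 (repunit n))
      = smult a (monom (of_nat n) 1 + smult (- 2) (repunit n))] (mod (monom 1 n - 1))"
    unfolding mult_smult_right by (intro cong_smult monom_mult_const_minus_repunit_cong)
  also have "smult a (monom (of_nat n) 1 + smult (- 2) (repunit n))
      = monom (of_nat n * a) 1 + smult (- 2 * a) (repunit n)"
    by (simp add: smult_add_right smult_diff_right smult_monom mult.commute)
  finally show "[monom 1 1 * smult a ([:of_nat n:] - smult 2 (repunit n))
      = monom (of_nat n * a) 1 + smult (- 2 * a) (repunit n)] (mod (monom 1 n - 1))" .
  have "poly (monom 1 1 * smult a ([:of_nat n:] - smult 2 (repunit n))) 1 = - (of_nat n * a)"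
    by (simp add: poly_monom poly_repunit_one algebra_simps)
  with assms(1,2) show "poly (monom 1 1 * smult a ([:of_nat n:] - smult 2 (repunit n))) 1 ^ N = 1"
    by simp
qed (use assms in simp_all)

lemma dvd_lcm_period:
  fixes d k N :: nat
  assumes "N = (if odd d then lcm k (d + 1) else lcm k (2 * (d + 1)))"
  shows "k dvd N" and "even N" and "(d + 1) dvd N"
proof -
  have "k dvd N \<and> even N \<and> (d + 1) dvd N"
  proof (cases "odd d")
    case True
    then have "N = lcm k (d + 1)" "even (d + 1)" using assms by simp_all
    then show ?thesis by (metis dvd_lcm1 dvd_lcm2 dvd_trans)
  next
    case False
    then have "N = lcm k (2 * (d + 1))" using assms by simp
    then show ?thesis by (metis dvd_lcm1 dvd_lcm2 dvd_trans dvd_triv_left dvd_triv_right)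
  qed
  then show "k dvd N" "even N" "(d + 1) dvd N" by simp_all
qed

theorem proposition18:
  fixes d k N :: nat and a :: complex and p :: "complex poly"
  assumes "d \<ge> 2"
    and "k > 0" and "(of_nat (d + 1) * a) ^ k = 1"
    and "\<And>j. 0 < j \<Longrightarrow> j < k \<Longrightarrow> (of_nat (d + 1) * a) ^ j \<noteq> 1"
    and "p = smult a (Poly (of_nat (d - 1) # replicate d (-2)))"
    and "N = (if odd d then lcm k (d + 1) else lcm k (2 * (d + 1)))"
  shows "\<forall>m \<ge> 1. col_partial_sum p (m + N) = col_partial_sum p m"
proof -
  define r :: "complex poly" where "r = [:of_nat (d + 1):] - smult 2 (repunit (d + 1))"
  have p: "p = smult a r"
    unfolding assms(5) r_def using assms(1) by (subst Poly_eq_const_minus_repunit) simp_all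
  have "a \<noteq> 0"
    using assms(2,3) by (auto simp: zero_power)
  moreover have "degree r = d"
    unfolding r_def using assms(1) by (intro degree_const_minus_repunit) simp
  ultimately have deg: "degree p = d"
    by (simp add: p)
  obtain t where "N = k * t"
    using dvd_lcm_period(1)[OF assms(6)] ..
  with assms(3) have "(of_nat (d + 1) * a) ^ N = 1"
    by (simp add: power_mult)
  then have "[(monom 1 1 * p) ^ N = 1] (mod (monom 1 (degree p + 1) - 1))"
    unfolding deg unfolding p r_def using dvd_lcm_period(2,3)[OF assms(6)]
    by (intro power_monom_mult_smult_const_minus_repunit_cong_one) (simp_all only: of_nat_eq_0_iff)
  moreover have "poly (pderiv (monom 1 1 * p)) 1 = of_nat (degree p + 1) * poly (monom 1 1 * p) 1"
    unfolding deg unfolding p r_def by (rule poly_pderiv_monom_mult_smult_const_minus_repunit)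
  ultimately show ?thesis
    using col_partial_sum_periodic by blast
qed

end
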